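(* There exist a wGKAT automaton $(Y,\gamma)$ and a homomorphism $h:(\mathrm{Exp},\partial)\to(Y,\gamma)$ whose kernel $\{(e,f): h(e)=h(f)\}$ is exactly the relation $\equiv$; concretely, there is a transition map $\partial_\equiv$ on $\mathrm{Exp}/{\equiv}$ making the quotient map $[-]_\equiv$ a homomorphism from $(\mathrm{Exp},\partial)$ to $(\mathrm{Exp}/{\equiv},\partial_\equiv)$.
   Context: Fix a finite set $T$ of primitive tests, a set $\mathrm{Act}$ of atomic actions, a set $\mathrm{Out}$ of return values, and a semiring $(S,+,\cdot,0,1)$ that is positive ($x+y=0\Rightarrow x=y=0$), refinement (whenever $x+y=z+w$ there exist $s,t,u,v$ with $s+t=x$, $s+u=z$, $u+v=y$, $t+v=w$) and Conway (with ${}^*:S\to S$ satisfying $(a+b)^*=a^*(ba^* )^*$, $(ab)^*=1+a(ba)^*b$). Tests: $b,c\in\mathrm{BExp}::=\mathtt{0}\mid\mathtt{1}\mid t\ (t\in T)\mid\bar b\mid b+c\mid bc$ ($\mathtt 0,\mathtt 1$ false/true, distinct from semiring $0,1$); $\equiv_{BA}$ is Boolean equivalence; $\mathrm{At}$ is the finite set of atoms of the free Boolean algebra on $T$, atoms also regarded as tests; $\alpha\le b$ means $\alpha$ entails $b$. Expressions: $e,f\in\mathrm{Exp}::= p\in\mathrm{Act}\mid b\in\mathrm{BExp}\mid e+_b f\mid e;f\mid e^{(b)}\mid v\in\mathrm{Out}\mid e\oplus_{r,s} f\ (r,s\in S)$; $\odot r:=\mathtt 1\oplus_{r,0}\mathtt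 0$. $\mathcal M_\omega(X)$: finitely supported maps $X\to S$, pointwise operations; $\delta_x$ indicator of $x$; $\nu[A]=\sum_{x\in A}\nu(x)$. A wGKAT automaton is $(X,\beta)$ with $\beta:X\to\mathcal M_\omega(\{\mathsf{acc},\mathsf{rej}\}+\mathrm{Out}+\mathrm{Act}\times X)^{\mathrm{At}}$. A map $h:X\to Y$ between automata $(X,\beta),(Y,\gamma)$ is a homomorphism if for all $x,\alpha$: $\gamma(h(x))_\alpha(o)=\beta(x)_\alpha(o)$ for $o\in\{\mathsf{acc},\mathsf{rej}\}+\mathrm{Out}$, and $\gamma(h(x))_\alpha(p,y)=\beta(x)_\alpha[\{p\}\times h^{-1}(y)]$. The derivative automaton $(\mathrm{Exp},\partial)$: $\partial(b)_\alpha=\delta_{\mathsf{acc}}$ if $\alpha\le b$, else $\delta_{\mathsf{rej}}$; $\partial(v)_\alpha=\delta_v$; $\partial(p)_\alpha=\delta_{(p,\mathtt 1)}$; $\partial(e+_bf)_\alpha=\partial(e)_\alpha$ if $\alpha\le b$, else $\partial(f)_\alpha$; $\partial(e\oplus_{r,s}f)_\alpha=r\partial(e)_\alpha+s\partial(f)_\alpha$; $\partial(e;f)_\alpha=\sum_x\partial(e)_\alpha(x)c_{\alpha,f}(x)$ with $c_{\alpha,f}(\mathsf{acc})=\partial(f)_\alpha$, $c_{\alpha,f}(x)=\delta_x$ for $x\in\{\mathsf{rej}\}\cup\mathrm{Out}$, $c_{\alpha,f}(p,e')=\delta_{(p,e';f)}$; $\partial(e^{(b)})_\alpha(x)$ is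 $1$ if $x=\mathsf{acc}$ and $\alpha\le\bar b$; $\partial(e)_\alpha(\mathsf{acc})^*\partial(e)_\alpha(x)$ if $x\in\{\mathsf{rej}\}\cup\mathrm{Out}$ and $\alpha\le b$; $\partial(e)_\alpha(\mathsf{acc})^*\partial(e)_\alpha(p,e')$ if $x=(p,e';e^{(b)})$ and $\alpha\le b$; $0$ otherwise. $E:\mathrm{Exp}\to S^{\mathrm{At}}$: $E(p)_\alpha=E(v)_\alpha=0$; $E(b)_\alpha=1$ if $\alpha\le b$ else $0$; $E(e\oplus_{r,s}f)_\alpha=rE(e)_\alpha+sE(f)_\alpha$; $E(e+_bf)_\alpha=E(e)_\alpha$ if $\alpha\le b$ else $E(f)_\alpha$; $E(e;f)_\alpha=E(e)_\alpha E(f)_\alpha$; $E(e^{(b)})_\alpha=E(\bar b)_\alpha$. The relation $\equiv$ is the smallest congruence on $\mathrm{Exp}$ (tests taken up to $\equiv_{BA}$; sequencing binds tighter than $\oplus$, $\odot$ binds tightest) containing, for all $e,f,g\in\mathrm{Exp}$, tests $b,c$, $v\in\mathrm{Out}$, $r,s,t,u\in S$: (G1) $e+_be\equiv e$; (G2) $e+_bf\equiv b;e+_bf$; (G3) $e+_bf\equiv f+_{\bar b}e$; (G4) $(e+_bf)+_cg\equiv e+_{bc}(f+_cg)$; (D1) $e\oplus_{r,s}(f+_bg)\equiv(e\oplus_{r,s}f)+_b(e\oplus_{r,s}g)$; (D2) $e\oplus_{r,s}(f\oplus_{t,u}g)\equiv e\oplus_{r,1}(f\oplus_{st,su}g)$;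 (D3) $b;(e\oplus_{r,s}f)\equiv b;(b;e\oplus_{r,s}b;f)$; (S1) $\mathtt 1;e\equiv e\equiv e;\mathtt 1$; (S2) $(e;f);g\equiv e;(f;g)$; (S3) $\mathtt 0;e\equiv\mathtt 0$; (S4) $(e\oplus_{r,s}f);g\equiv e;g\oplus_{r,s}f;g$; (S5) $(e+_bf);g\equiv e;g+_bf;g$; (S6) $v;e\equiv v$; (S7) $b;c\equiv bc$; (L1) $e^{(b)}\equiv e;e^{(b)}+_b\mathtt 1$; (C1) $\odot1\equiv\mathtt 1$; (C2) $\odot0;e\equiv\odot0$; (W1) $e\oplus_{r,s}e\equiv\odot(r+s);e$; (W2) $e\oplus_{r,s}f\equiv f\oplus_{s,r}e$; (W3) $e\oplus_{r,s}(f\oplus_{t,u}g)\equiv(e\oplus_{r,st}f)\oplus_{1,su}g$; (W4) $e\oplus_{ru,s}f\equiv(\odot u;e)\oplus_{r,s}f$; and closed under the rules (L2) if $e\equiv(f\oplus_{r,s}\mathtt 1)+_cg$ then $c;e^{(b)}\equiv c;((\odot(s^*r);f;e^{(b)})+_b\mathtt 1)$; (F1) if $g\equiv e;g+_bf$ and $E(e)_\alpha=0$ for all $\alpha\in\mathrm{At}$ then $g\equiv e^{(b)};f$. *)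

theory Defs
  imports Main
begin

class wgkat_semiring = semiring_0 + monoid_mult +
  fixes cstar :: "'a \<Rightarrow> 'a"
  assumes positive: "x + y = 0 \<Longrightarrow> x = 0 \<and> y = 0"
  and refinement: "x + y = z + w \<Longrightarrow>
        \<exists>s t u v. s + t = x \<and> s + u = z \<and> u + v = y \<and> t + v = w"
  and conway_sum: "cstar (a + b) = cstar a * cstar (b * cstar a)"
  and conway_prod: "cstar (a * b) = 1 + a * cstar (b * a) * b"

datatype 't bexp = BZero | BOne | BPrim 't | BNeg "'t bexp"
  | BOr "'t bexp" "'t bexp" | BAnd "'t bexp" "'t bexp"

text \<open>Atoms of the free Boolean algebra over a finite set of primitive tests
  are identified with sets of primitive tests (the tests that are true).
  sat alpha b means alpha entails b.\<close>
type_synonym 't atom = "'t set"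

primrec sat :: "'t atom \<Rightarrow> 't bexp \<Rightarrow> bool" where
  "sat \<alpha> BZero = False"
| "sat \<alpha> BOne = True"
| "sat \<alpha> (BPrim t) = (t \<in> \<alpha>)"
| "sat \<alpha> (BNeg b) = (\<not> sat \<alpha> b)"
| "sat \<alpha> (BOr b c) = (sat \<alpha> b \<or> sat \<alpha> c)"
| "sat \<alpha> (BAnd b c) = (sat \<alpha> b \<and> sat \<alpha> c)"

definition beq :: "'t bexp \<Rightarrow> 't bexp \<Rightarrow> bool" where
  "beq b c \<longleftrightarrow> (\<forall>\<alpha>. sat \<alpha> b = sat \<alpha> c)"

datatype ('t, 'p, 'v, 's) exp =
    Act 'p
  | Test "'t bexp"
  | GSum "('t, 'p, 'v, 's) exp" "'t bexp" "('t, 'p, 'v, 's) exp"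
  | Seq "('t, 'p, 'v, 's) exp" "('t, 'p, 'v, 's) exp"
  | While "('t, 'p, 'v, 's) exp" "'t bexp"
  | Ret 'v
  | WSum "('t, 'p, 'v, 's) exp" 's 's "('t, 'p, 'v, 's) exp"

definition odot :: "'s::wgkat_semiring \<Rightarrow> ('t, 'p, 'v, 's) exp" where
  "odot r = WSum (Test BOne) r 0 (Test BZero)"

datatype ('p, 'v, 'x) outc = Acc | Rej | OutV 'v | Trans 'p 'x

definition fin_supp :: "('a \<Rightarrow> 's::zero) \<Rightarrow> bool" where
  "fin_supp \<nu> \<longleftrightarrow> finite {x. \<nu> x \<noteq> 0}"

definition dirac :: "'a \<Rightarrow> 'a \<Rightarrow> 's::{zero,one}" where
  "dirac x = (\<lambda>y. if y = x then 1 else 0)"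

definition mass :: "('a \<Rightarrow> 's::comm_monoid_add) \<Rightarrow> 'a set \<Rightarrow> 's" where
  "mass \<nu> A = sum \<nu> {x \<in> A. \<nu> x \<noteq> 0}"

definition wgkat_automaton ::
  "('x \<Rightarrow> 't atom \<Rightarrow> ('p, 'v, 'x) outc \<Rightarrow> 's::wgkat_semiring) \<Rightarrow> bool" where
  "wgkat_automaton \<beta> \<longleftrightarrow> (\<forall>x \<alpha>. fin_supp (\<beta> x \<alpha>))"

definition is_hom ::
  "('x \<Rightarrow> 't atom \<Rightarrow> ('p, 'v, 'x) outc \<Rightarrow> 's::wgkat_semiring)
   \<Rightarrow> ('y \<Rightarrow> 't atom \<Rightarrow> ('p, 'v, 'y) outc \<Rightarrow> 's)
   \<Rightarrow> ('x \<Rightarrow> 'y) \<Rightarrow> bool" where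
  "is_hom \<beta> \<gamma> h \<longleftrightarrow>
     (\<forall>x \<alpha>. \<gamma> (h x) \<alpha> Acc = \<beta> x \<alpha> Acc
          \<and> \<gamma> (h x) \<alpha> Rej = \<beta> x \<alpha> Rej
          \<and> (\<forall>v. \<gamma> (h x) \<alpha> (OutV v) = \<beta> x \<alpha> (OutV v))
          \<and> (\<forall>p y. \<gamma> (h x) \<alpha> (Trans p y) = mass (\<beta> x \<alpha>) {Trans p x' | x'. h x' = y}))"

primrec deriv :: "('t, 'p, 'v, 's::wgkat_semiring) exp \<Rightarrow> 't atom
                   \<Rightarrow> ('p, 'v, ('t, 'p, 'v, 's) exp) outc \<Rightarrow> 's" where
  "deriv (Test b) \<alpha> = dirac (if sat \<alpha> b then Acc else Rej)"
| "deriv (Ret v) \<alpha> = dirac (OutV v)"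
| "deriv (Act p) \<alpha> = dirac (Trans p (Test BOne))"
| "deriv (GSum e b f) \<alpha> = (if sat \<alpha> b then deriv e \<alpha> else deriv f \<alpha>)"
| "deriv (WSum e r s f) \<alpha> = (\<lambda>z. r * deriv e \<alpha> z + s * deriv f \<alpha> z)"
| "deriv (Seq e f) \<alpha> = (\<lambda>z. deriv e \<alpha> Acc * deriv f \<alpha> z +
      (case z of
         Acc \<Rightarrow> 0
       | Rej \<Rightarrow> deriv e \<alpha> Rej
       | OutV v \<Rightarrow> deriv e \<alpha> (OutV v)
       | Trans p g \<Rightarrow> (case g of Seq e' f' \<Rightarrow> if f' = f then deriv e \<alpha> (Trans p e') else 0
                                | _ \<Rightarrow> 0)))"
| "deriv (While e b) \<alpha> = (\<lambda>z.
      (case z of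
         Acc \<Rightarrow> (if sat \<alpha> (BNeg b) then 1 else 0)
       | Rej \<Rightarrow> (if sat \<alpha> b then cstar (deriv e \<alpha> Acc) * deriv e \<alpha> Rej else 0)
       | OutV v \<Rightarrow> (if sat \<alpha> b then cstar (deriv e \<alpha> Acc) * deriv e \<alpha> (OutV v) else 0)
       | Trans p g \<Rightarrow> (case g of
            Seq e' f' \<Rightarrow> if sat \<alpha> b \<and> f' = While e b
                          then cstar (deriv e \<alpha> Acc) * deriv e \<alpha> (Trans p e') else 0
          | _ \<Rightarrow> 0)))"

primrec Eps :: "('t, 'p, 'v, 's::wgkat_semiring) exp \<Rightarrow> 't atom \<Rightarrow> 's" where
  "Eps (Act p) \<alpha> = 0"
| "Eps (Ret v) \<alpha> = 0"
| "Eps (Test b) \<alpha> = (if sat \<alpha> b then 1 else 0)"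
| "Eps (WSum e r s f) \<alpha> = r * Eps e \<alpha> + s * Eps f \<alpha>"
| "Eps (GSum e b f) \<alpha> = (if sat \<alpha> b then Eps e \<alpha> else Eps f \<alpha>)"
| "Eps (Seq e f) \<alpha> = Eps e \<alpha> * Eps f \<alpha>"
| "Eps (While e b) \<alpha> = (if sat \<alpha> (BNeg b) then 1 else 0)"

inductive eqv :: "('t, 'p, 'v, 's::wgkat_semiring) exp \<Rightarrow> ('t, 'p, 'v, 's) exp \<Rightarrow> bool"
  (infix "\<equiv>\<^sub>w" 50) where
  refl: "e \<equiv>\<^sub>w e"
| sym: "e \<equiv>\<^sub>w f \<Longrightarrow> f \<equiv>\<^sub>w e"
| trans: "e \<equiv>\<^sub>w f \<Longrightarrow> f \<equiv>\<^sub>w g \<Longrightarrow> e \<equiv>\<^sub>w g"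
| cong_test: "beq b c \<Longrightarrow> Test b \<equiv>\<^sub>w Test c"
| cong_gsum: "e \<equiv>\<^sub>w e' \<Longrightarrow> beq b b' \<Longrightarrow> f \<equiv>\<^sub>w f' \<Longrightarrow> GSum e b f \<equiv>\<^sub>w GSum e' b' f'"
| cong_seq: "e \<equiv>\<^sub>w e' \<Longrightarrow> f \<equiv>\<^sub>w f' \<Longrightarrow> Seq e f \<equiv>\<^sub>w Seq e' f'"
| cong_while: "e \<equiv>\<^sub>w e' \<Longrightarrow> beq b b' \<Longrightarrow> While e b \<equiv>\<^sub>w While e' b'"
| cong_wsum: "e \<equiv>\<^sub>w e' \<Longrightarrow> f \<equiv>\<^sub>w f' \<Longrightarrow> WSum e r s f \<equiv>\<^sub>w WSum e' r s f'"
| G1: "GSum e b e \<equiv>\<^sub>w e"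
| G2: "GSum e b f \<equiv>\<^sub>w GSum (Seq (Test b) e) b f"
| G3: "GSum e b f \<equiv>\<^sub>w GSum f (BNeg b) e"
| G4: "GSum (GSum e b f) c g \<equiv>\<^sub>w GSum e (BAnd b c) (GSum f c g)"
| D1: "WSum e r s (GSum f b g) \<equiv>\<^sub>w GSum (WSum e r s f) b (WSum e r s g)"
| D2: "WSum e r s (WSum f t u g) \<equiv>\<^sub>w WSum e r 1 (WSum f (s * t) (s * u) g)"
| D3: "Seq (Test b) (WSum e r s f) \<equiv>\<^sub>w
       Seq (Test b) (WSum (Seq (Test b) e) r s (Seq (Test b) f))"
| S1a: "Seq (Test BOne) e \<equiv>\<^sub>w e"
| S1b: "e \<equiv>\<^sub>w Seq e (Test BOne)"
| S2: "Seq (Seq e f) g \<equiv>\<^sub>w Seq e (Seq f g)"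
| S3: "Seq (Test BZero) e \<equiv>\<^sub>w Test BZero"
| S4: "Seq (WSum e r s f) g \<equiv>\<^sub>w WSum (Seq e g) r s (Seq f g)"
| S5: "Seq (GSum e b f) g \<equiv>\<^sub>w GSum (Seq e g) b (Seq f g)"
| S6: "Seq (Ret v) e \<equiv>\<^sub>w Ret v"
| S7: "Seq (Test b) (Test c) \<equiv>\<^sub>w Test (BAnd b c)"
| L1: "While e b \<equiv>\<^sub>w GSum (Seq e (While e b)) b (Test BOne)"
| C1: "odot 1 \<equiv>\<^sub>w Test BOne"
| C2: "Seq (odot 0) e \<equiv>\<^sub>w odot 0"
| W1: "WSum e r s e \<equiv>\<^sub>w Seq (odot (r + s)) e"
| W2: "WSum e r s f \<equiv>\<^sub>w WSum f s r e"
| W3: "WSum e r s (WSum f t u g) \<equiv>\<^sub>w WSum (WSum e r (s * t) f) 1 (s * u) g"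
| W4: "WSum e (r * u) s f \<equiv>\<^sub>w WSum (Seq (odot u) e) r s f"
| L2: "e \<equiv>\<^sub>w GSum (WSum f r s (Test BOne)) c g \<Longrightarrow>
       Seq (Test c) (While e b) \<equiv>\<^sub>w
       Seq (Test c) (GSum (Seq (odot (cstar s * r)) (Seq f (While e b))) b (Test BOne))"
| F1: "g \<equiv>\<^sub>w GSum (Seq e g) b f \<Longrightarrow> (\<forall>\<alpha>. Eps e \<alpha> = 0) \<Longrightarrow> g \<equiv>\<^sub>w Seq (While e b) f"

end

theory Submission
  imports Defs
begin

(* The class map e |-> [e] is a homomorphism onto an automaton on the classes of == as soon as
   the pushforward of the derivative along it depends only on the class of e; the transitions of a
   class are then read off any representative. This is a soundness statement, proved by induction
   on derivations of e == f: e and f have the same output weights and give the same transition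
   weight to every ==-closed set of expressions. Closed sets rather than classes are needed
   because the derivatives of e;f and e^(b) pull a class back along x |-> x;f, which yields a
   closed set but not a class. The loop axioms L1 and L2 reduce to Conway identities, and in F1
   the hypothesis E(e) = 0 makes the star trivial. *)

lemma fin_supp_subset: "fin_supp \<nu> \<Longrightarrow> (\<And>x. \<mu> x \<noteq> 0 \<Longrightarrow> \<nu> x \<noteq> 0) \<Longrightarrow> fin_supp \<mu>"
  unfolding fin_supp_def by (rule finite_subset[of _ "{x. \<nu> x \<noteq> 0}"]) auto

lemma fin_supp_image:
  assumes "fin_supp \<nu>" and "\<And>z. \<mu> z \<noteq> 0 \<Longrightarrow> z \<in> g ` {x. \<nu> x \<noteq> 0}"
  shows "fin_supp \<mu>"
proof -
  have "{z. \<mu> z \<noteq> 0} \<subseteq> g ` {x. \<nu> x \<noteq> 0}"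
    using assms(2) by blast
  then show ?thesis
    using assms(1) unfolding fin_supp_def by (metis finite_surj)
qed

lemma fin_supp_add:
  "fin_supp \<mu> \<Longrightarrow> fin_supp \<nu> \<Longrightarrow> fin_supp (\<lambda>x. \<mu> x + \<nu> x :: 's::monoid_add)"
  unfolding fin_supp_def by (rule finite_subset[of _ "{x. \<mu> x \<noteq> 0} \<union> {x. \<nu> x \<noteq> 0}"]) auto

lemma fin_supp_mult_left: "fin_supp \<nu> \<Longrightarrow> fin_supp (\<lambda>x. c * \<nu> x :: 's::mult_zero)"
  by (erule fin_supp_subset) auto

lemma fin_supp_dirac: "fin_supp (dirac x)"
  unfolding fin_supp_def dirac_def by (rule finite_subset[of _ "{x}"]) auto

lemma fin_supp_comp_inj: "fin_supp \<nu> \<Longrightarrow> inj f \<Longrightarrow> fin_supp (\<lambda>x. \<nu> (f x))"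
  unfolding fin_supp_def by (drule finite_vimageI) (auto simp: vimage_def)

lemma mass_eq_sum:
  "finite F \<Longrightarrow> {x. \<nu> x \<noteq> 0} \<subseteq> F \<Longrightarrow> mass \<nu> A = sum \<nu> (A \<inter> F)"
  unfolding mass_def by (rule sum.mono_neutral_left) auto

lemma mass_add:
  assumes "fin_supp \<mu>" and "fin_supp \<nu>"
  shows "mass (\<lambda>x. \<mu> x + \<nu> x) A = mass \<mu> A + mass \<nu> A"
proof -
  let ?F = "{x. \<mu> x \<noteq> 0} \<union> {x. \<nu> x \<noteq> 0}"
  have "finite ?F" using assms by (simp add: fin_supp_def)
  then show ?thesis by (subst (1 2 3) mass_eq_sum[of ?F]) (auto simp: sum.distrib)
qed

lemma mass_mult_left:
  "fin_supp \<nu> \<Longrightarrow> mass (\<lambda>x. c * \<nu> x) A = c * mass \<nu> A" for c :: "'s::semiring_0"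
  unfolding fin_supp_def by (subst (1 2) mass_eq_sum) (auto simp: sum_distrib_left)

lemma mass_zero [simp]: "mass (\<lambda>x. 0) A = 0"
  by (simp add: mass_def)

lemma mass_nonzero_imp_ex: "mass \<nu> A \<noteq> 0 \<Longrightarrow> \<exists>x\<in>A. \<nu> x \<noteq> 0"
  unfolding mass_def by (metis (mono_tags, lifting) empty_Collect_eq sum.empty)

lemma mass_reindex:
  assumes "inj f" and "\<And>y. \<mu> y \<noteq> 0 \<Longrightarrow> y \<in> range f" and "\<And>x. \<mu> (f x) = \<nu> x"
  shows "mass \<mu> A = mass \<nu> {x. f x \<in> A}"
proof -
  have "{y \<in> A. \<mu> y \<noteq> 0} = f ` {x \<in> {x. f x \<in> A}. \<nu> x \<noteq> 0}"
    using assms by (force simp: image_iff)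
  then show ?thesis
    unfolding mass_def using assms(1,3) by (simp add: sum.reindex inj_on_def inj_def)
qed

lemma mass_Trans: "mass \<nu> {Trans p x | x. P x} = mass (\<lambda>x. \<nu> (Trans p x)) {x. P x}"
proof -
  have "{y \<in> {Trans p x | x. P x}. \<nu> y \<noteq> 0} = Trans p ` {x \<in> {x. P x}. \<nu> (Trans p x) \<noteq> 0}"
    by auto
  then show ?thesis
    unfolding mass_def by (simp add: sum.reindex inj_on_def)
qed

section \<open>Quotients of wGKAT automata\<close>

definition pushforward ::
  "('x \<Rightarrow> 'y) \<Rightarrow> (('p, 'v, 'x) outc \<Rightarrow> 's::comm_monoid_add) \<Rightarrow> ('p, 'v, 'y) outc \<Rightarrow> 's" where
  "pushforward h \<nu> z = (case z of
       Acc \<Rightarrow> \<nu> Acc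
     | Rej \<Rightarrow> \<nu> Rej
     | OutV v \<Rightarrow> \<nu> (OutV v)
     | Trans p y \<Rightarrow> mass \<nu> {Trans p x | x. h x = y})"

lemma fin_supp_pushforward: "fin_supp \<nu> \<Longrightarrow> fin_supp (pushforward h \<nu>)"
proof (erule fin_supp_image[where g = "map_outc id id h"])
  fix z assume nz: "pushforward h \<nu> z \<noteq> 0"
  show "z \<in> map_outc id id h ` {z. \<nu> z \<noteq> 0}"
  proof (cases z)
    case (Trans p y)
    then obtain x where "h x = y" "\<nu> (Trans p x) \<noteq> 0"
      using nz mass_nonzero_imp_ex by (fastforce simp: pushforward_def)
    then show ?thesis
      using Trans by (auto intro: image_eqI[of _ _ "Trans p x"])
  qed (use nz in \<open>force simp: pushforward_def image_iff\<close>)+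
qed

lemma is_hom_iff_pushforward:
  "is_hom \<beta> \<gamma> h \<longleftrightarrow> (\<forall>x \<alpha>. \<gamma> (h x) \<alpha> = pushforward h (\<beta> x \<alpha>))"
  unfolding is_hom_def pushforward_def fun_eq_iff by (auto split: outc.split)

lemma quotient_automaton_exists:
  assumes "wgkat_automaton \<beta>"
    and "\<And>x y \<alpha>. h x = h y \<Longrightarrow> pushforward h (\<beta> x \<alpha>) = pushforward h (\<beta> y \<alpha>)"
  shows "\<exists>\<gamma>. wgkat_automaton \<gamma> \<and> is_hom \<beta> \<gamma> h"
proof (intro exI conjI)
  let ?\<gamma> = "\<lambda>y \<alpha>. pushforward h (\<beta> (SOME x. h x = y) \<alpha>)"
  show "wgkat_automaton ?\<gamma>"
    using assms(1) by (simp add: wgkat_automaton_def fin_supp_pushforward)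
  show "is_hom \<beta> ?\<gamma> h"
    unfolding is_hom_iff_pushforward
  proof (intro allI)
    fix x \<alpha>
    have "h (SOME x'. h x' = h x) = h x"
      using someI[of "\<lambda>x'. h x' = h x" x] by simp
    then show "?\<gamma> (h x) \<alpha> = pushforward h (\<beta> x \<alpha>)"
      by (rule assms(2))
  qed
qed

lemma fin_supp_deriv: "fin_supp (deriv e \<alpha>)"
proof (induction e arbitrary: \<alpha>)
  case (Seq e f)
  let ?tail = "\<lambda>z. case z of
       Acc \<Rightarrow> 0
     | Rej \<Rightarrow> deriv e \<alpha> Rej
     | OutV v \<Rightarrow> deriv e \<alpha> (OutV v)
     | Trans p g \<Rightarrow> (case g of Seq e' f' \<Rightarrow> if f' = f then deriv e \<alpha> (Trans p e') else 0 | _ \<Rightarrow> 0)"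
  have "fin_supp ?tail"
    by (rule fin_supp_image[OF Seq.IH(1), where g = "map_outc id id (\<lambda>x. Seq x f)"])
      (force simp: image_iff split: outc.splits exp.splits if_splits)
  then show ?case
    using Seq.IH by (simp add: fin_supp_add fin_supp_mult_left del: outc.case_distrib)
next
  case (While e b)
  have "{z. deriv (While e b) \<alpha> z \<noteq> 0}
      \<subseteq> insert Acc (map_outc id id (\<lambda>x. Seq x (While e b)) ` {z. deriv e \<alpha> z \<noteq> 0})"
    (is "_ \<subseteq> ?S")
  proof
    fix z assume "z \<in> {z. deriv (While e b) \<alpha> z \<noteq> 0}"
    then show "z \<in> ?S"
      by (cases z) (force simp: image_iff split: exp.splits if_splits dest: mult_not_zero)+
  qed
  moreover have "finite ?S"
    using While.IH by (simp add: fin_supp_def)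
  ultimately show ?case
    unfolding fin_supp_def by (rule finite_subset)
qed (simp_all add: fin_supp_dirac fin_supp_add fin_supp_mult_left)

lemma Eps_eq_deriv_Acc: "Eps e \<alpha> = deriv e \<alpha> Acc"
  by (induction e) (simp_all add: dirac_def)

definition trans_mass ::
  "('t, 'p, 'v, 's::wgkat_semiring) exp \<Rightarrow> 't atom \<Rightarrow> 'p \<Rightarrow> ('t, 'p, 'v, 's) exp set \<Rightarrow> 's" where
  "trans_mass e \<alpha> p D = mass (\<lambda>x. deriv e \<alpha> (Trans p x)) D"

lemma fin_supp_deriv_Trans: "fin_supp (\<lambda>x. deriv e \<alpha> (Trans p x))"
  by (rule fin_supp_comp_inj[OF fin_supp_deriv]) (simp add: inj_def)

lemma trans_mass_Test [simp]: "trans_mass (Test b) \<alpha> p D = 0"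
  by (simp add: trans_mass_def dirac_def)

lemma trans_mass_Ret [simp]: "trans_mass (Ret v) \<alpha> p D = 0"
  by (simp add: trans_mass_def dirac_def)

lemma trans_mass_GSum [simp]:
  "trans_mass (GSum e b f) \<alpha> p D = (if sat \<alpha> b then trans_mass e \<alpha> p D else trans_mass f \<alpha> p D)"
  by (simp add: trans_mass_def)

lemma trans_mass_WSum [simp]:
  "trans_mass (WSum e r s f) \<alpha> p D = r * trans_mass e \<alpha> p D + s * trans_mass f \<alpha> p D"
  by (simp add: trans_mass_def mass_add mass_mult_left fin_supp_mult_left fin_supp_deriv_Trans)

lemma trans_mass_Seq [simp]:
  "trans_mass (Seq e f) \<alpha> p D
     = deriv e \<alpha> Acc * trans_mass f \<alpha> p D + trans_mass e \<alpha> p {x. Seq x f \<in> D}"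
proof -
  let ?tail = "\<lambda>g. case g of Seq e' f' \<Rightarrow> if f' = f then deriv e \<alpha> (Trans p e') else 0 | _ \<Rightarrow> 0"
  have "fin_supp ?tail"
    by (rule fin_supp_image[OF fin_supp_deriv_Trans, where g = "\<lambda>x. Seq x f"])
      (force split: exp.splits if_splits)
  then have "trans_mass (Seq e f) \<alpha> p D = deriv e \<alpha> Acc * trans_mass f \<alpha> p D + mass ?tail D"
    by (simp add: trans_mass_def mass_add mass_mult_left fin_supp_mult_left fin_supp_deriv_Trans)
  also have "mass ?tail D = trans_mass e \<alpha> p {x. Seq x f \<in> D}"
    unfolding trans_mass_def by (rule mass_reindex) (auto simp: inj_def split: exp.splits if_splits)
  finally show ?thesis .
qed

lemma trans_mass_While [simp]:
  "trans_mass (While e b) \<alpha> p D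
     = (if sat \<alpha> b then cstar (deriv e \<alpha> Acc) * trans_mass e \<alpha> p {x. Seq x (While e b) \<in> D} else 0)"
proof -
  have "trans_mass (While e b) \<alpha> p D
      = mass (\<lambda>x. if sat \<alpha> b then cstar (deriv e \<alpha> Acc) * deriv e \<alpha> (Trans p x) else 0)
          {x. Seq x (While e b) \<in> D}"
    unfolding trans_mass_def by (rule mass_reindex) (auto simp: inj_def split: exp.splits if_splits)
  then show ?thesis
    by (simp add: trans_mass_def mass_mult_left fin_supp_deriv_Trans)
qed

section \<open>Soundness of the axioms for the derivative automaton\<close>

definition eqv_closed :: "('t, 'p, 'v, 's::wgkat_semiring) exp set \<Rightarrow> bool" where
  "eqv_closed D \<longleftrightarrow> (\<forall>x y. x \<in> D \<longrightarrow> x \<equiv>\<^sub>w y \<longrightarrow> y \<in> D)"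

lemma eqv_closed_vimage_Seq: "eqv_closed D \<Longrightarrow> eqv_closed {x. Seq x f \<in> D}"
  unfolding eqv_closed_def by (blast intro: eqv.cong_seq eqv.refl)

lemma eqv_closed_vimage_cong:
  "eqv_closed D \<Longrightarrow> (\<And>x. g x \<equiv>\<^sub>w g' x) \<Longrightarrow> {x. g x \<in> D} = {x. g' x \<in> D}"
  unfolding eqv_closed_def by (blast intro: eqv.sym)

definition deriv_agree :: "'t atom \<Rightarrow> ('t, 'p, 'v, 's::wgkat_semiring) exp \<Rightarrow> ('t, 'p, 'v, 's) exp \<Rightarrow> bool" where
  "deriv_agree \<alpha> e f \<longleftrightarrow>
     deriv e \<alpha> Acc = deriv f \<alpha> Acc \<and> deriv e \<alpha> Rej = deriv f \<alpha> Rej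
   \<and> (\<forall>v. deriv e \<alpha> (OutV v) = deriv f \<alpha> (OutV v))
   \<and> (\<forall>p D. eqv_closed D \<longrightarrow> trans_mass e \<alpha> p D = trans_mass f \<alpha> p D)"

definition deriv_equiv :: "('t, 'p, 'v, 's::wgkat_semiring) exp \<Rightarrow> ('t, 'p, 'v, 's) exp \<Rightarrow> bool" where
  "deriv_equiv e f \<longleftrightarrow> (\<forall>\<alpha>. deriv_agree \<alpha> e f)"

lemma deriv_agree_GSum_iff:
  "deriv_agree \<alpha> x (GSum e b f) \<longleftrightarrow> deriv_agree \<alpha> x (if sat \<alpha> b then e else f)"
  by (simp add: deriv_agree_def)

lemma cstar_unfold: "cstar a = 1 + a * cstar a"
  using conway_prod[of a 1] by simp

lemma cstar_zero [simp]: "cstar 0 = 1"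
  using conway_prod[of 0 0] by simp

lemma cstar_add_unfold: "cstar (a + s) = cstar s * a * cstar (a + s) + cstar s"
proof -
  have "cstar (a + s) = cstar s * cstar (a * cstar s)"
    using conway_sum[of s a] by (simp add: add.commute)
  also have "\<dots> = cstar s + cstar s * a * (cstar s * cstar (a * cstar s))"
    by (subst cstar_unfold) (simp add: algebra_simps)
  finally show ?thesis
    using conway_sum[of s a] by (simp add: add.commute)
qed

lemma cstar_mult_unfold: "cstar a * x = a * (cstar a * x) + x"
  by (subst cstar_unfold) (simp add: algebra_simps)

lemma cstar_add_mult_unfold:
  "cstar (r * a + s) * (r * x) = cstar s * r * (a * (cstar (r * a + s) * (r * x)) + x)"
proof -
  have "cstar (r * a + s) * (r * x) = (cstar s * (r * a) * cstar (r * a + s) + cstar s) * (r * x)"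
    using cstar_add_unfold[of "r * a" s] by (rule arg_cong)
  then show ?thesis
    by (simp add: algebra_simps)
qed

lemma deriv_equiv_L1: "deriv_equiv (While e b) (GSum (Seq e (While e b)) b (Test BOne))"
  unfolding deriv_equiv_def deriv_agree_def
  by (auto simp: dirac_def cstar_mult_unfold[symmetric])

lemma deriv_equiv_L2:
  assumes "deriv_equiv e (GSum (WSum f r s (Test BOne)) c g)"
  shows "deriv_equiv (Seq (Test c) (While e b))
           (Seq (Test c) (GSum (Seq (odot (cstar s * r)) (Seq f (While e b))) b (Test BOne)))"
    (is "deriv_equiv ?lhs ?rhs")
  unfolding deriv_equiv_def
proof
  fix \<alpha>
  show "deriv_agree \<alpha> ?lhs ?rhs"
  proof (cases "sat \<alpha> c \<and> sat \<alpha> b")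
    case False
    then show ?thesis
      by (cases "sat \<alpha> c") (simp_all add: deriv_agree_def dirac_def odot_def)
  next
    case True
    from assms True have "deriv e \<alpha> Acc = r * deriv f \<alpha> Acc + s"
      and "deriv e \<alpha> Rej = r * deriv f \<alpha> Rej"
      and "\<And>v. deriv e \<alpha> (OutV v) = r * deriv f \<alpha> (OutV v)"
      and "\<And>p D. eqv_closed D \<Longrightarrow> trans_mass e \<alpha> p D = r * trans_mass f \<alpha> p D"
      by (auto simp: deriv_equiv_def deriv_agree_def dirac_def)
    with True show ?thesis
      unfolding deriv_agree_def
      by (simp add: dirac_def odot_def eqv_closed_vimage_Seq)
        (intro conjI allI impI; rule cstar_add_mult_unfold)
        \<comment> \<open>not usable by simp: its right-hand side contains its left-hand side\<close>
  qed
qed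

lemma deriv_equiv_F1:
  assumes eqv: "g \<equiv>\<^sub>w GSum (Seq e g) b f" and equiv: "deriv_equiv g (GSum (Seq e g) b f)"
    and productive: "\<And>\<alpha>. Eps e \<alpha> = 0"
  shows "deriv_equiv g (Seq (While e b) f)"
proof -
  have e_Acc: "deriv e \<alpha> Acc = 0" for \<alpha>
    using productive by (simp add: Eps_eq_deriv_Acc)
  have "g \<equiv>\<^sub>w Seq (While e b) f"
    by (rule eqv.F1[OF eqv]) (simp add: productive)
  then have "Seq x g \<equiv>\<^sub>w Seq (Seq x (While e b)) f" for x
    by (rule eqv.trans[OF eqv.cong_seq[OF eqv.refl] eqv.sym[OF eqv.S2]])
  then have vimage_g: "{x. Seq x g \<in> D} = {x. Seq (Seq x (While e b)) f \<in> D}"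
    if "eqv_closed D" for D
    by (rule eqv_closed_vimage_cong[OF that])
  show ?thesis
    unfolding deriv_equiv_def
  proof
    fix \<alpha>
    have "deriv_agree \<alpha> g (GSum (Seq e g) b f)"
      using equiv by (simp add: deriv_equiv_def)
    then have "deriv_agree \<alpha> g (if sat \<alpha> b then Seq e g else f)"
      by (simp only: deriv_agree_GSum_iff)
      \<comment> \<open>unfolding deriv_agree here would let simp loop: trans_mass g recurs on the right\<close>
    then show "deriv_agree \<alpha> g (Seq (While e b) f)"
      by (cases "sat \<alpha> b") (simp_all add: deriv_agree_def e_Acc vimage_g)
  qed
qed

theorem eqv_imp_deriv_equiv: "e \<equiv>\<^sub>w f \<Longrightarrow> deriv_equiv e f"
proof (induction rule: eqv.induct)
  case (cong_seq e e' f f')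
  have "{x. Seq x f \<in> D} = {x. Seq x f' \<in> D}" if "eqv_closed D" for D
    by (rule eqv_closed_vimage_cong[OF that]) (rule eqv.cong_seq[OF eqv.refl cong_seq.hyps(2)])
  with cong_seq.IH show ?case
    by (simp add: deriv_equiv_def deriv_agree_def eqv_closed_vimage_Seq)
next
  case (cong_while e e' b b')
  have "{x. Seq x (While e b) \<in> D} = {x. Seq x (While e' b') \<in> D}" if "eqv_closed D" for D
    by (rule eqv_closed_vimage_cong[OF that])
      (rule eqv.cong_seq[OF eqv.refl eqv.cong_while[OF cong_while.hyps]])
  with cong_while.IH cong_while.hyps show ?case
    by (simp add: deriv_equiv_def deriv_agree_def eqv_closed_vimage_Seq beq_def)
next
  case (S1b e)
  have vimage_unit: "{x. Seq x (Test BOne) \<in> D} = D" if "eqv_closed D" for D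
    using eqv_closed_vimage_cong[OF that, of "\<lambda>x. Seq x (Test BOne)" "\<lambda>x. x"]
    by (simp add: eqv.S1b eqv.sym)
  show ?case
    by (simp add: deriv_equiv_def deriv_agree_def dirac_def vimage_unit)
next
  case (S2 e f g)
  have "{x. Seq (Seq x f) g \<in> D} = {x. Seq x (Seq f g) \<in> D}" if "eqv_closed D" for D
    by (rule eqv_closed_vimage_cong[OF that]) (rule eqv.S2)
  then show ?case
    by (simp add: deriv_equiv_def deriv_agree_def algebra_simps eqv_closed_vimage_Seq)
next
  case (L1 e b)
  show ?case by (rule deriv_equiv_L1)
next
  case (L2 e f r s c g b)
  from L2.IH show ?case by (rule deriv_equiv_L2)
next
  case (F1 g e b f)
  then show ?case by (intro deriv_equiv_F1) auto
qed (simp_all add: deriv_equiv_def deriv_agree_def dirac_def odot_def beq_def algebra_simps)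

lemma eqv_class_eq_iff: "{g. e \<equiv>\<^sub>w g} = {g. f \<equiv>\<^sub>w g} \<longleftrightarrow> e \<equiv>\<^sub>w f"
  by (blast intro: eqv.refl eqv.sym eqv.trans)

lemma eqv_closed_eqv_class_preimage: "eqv_closed {x. {g. x \<equiv>\<^sub>w g} = C}"
  unfolding eqv_closed_def by (simp add: eqv_class_eq_iff) (blast intro: eqv.sym eqv.trans)

lemma pushforward_deriv_eqv_class:
  assumes "e \<equiv>\<^sub>w f"
  shows "pushforward (\<lambda>e. {g. e \<equiv>\<^sub>w g}) (deriv e \<alpha>) = pushforward (\<lambda>e. {g. e \<equiv>\<^sub>w g}) (deriv f \<alpha>)"
proof -
  have "deriv_agree \<alpha> e f"
    using eqv_imp_deriv_equiv[OF assms] by (simp add: deriv_equiv_def)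
  then show ?thesis
    by (auto simp: fun_eq_iff pushforward_def deriv_agree_def mass_Trans
        eqv_closed_eqv_class_preimage trans_mass_def[symmetric] split: outc.split)
qed

theorem mainTheorem4:
  fixes dummy :: "('t::finite, 'p, 'v, 's::wgkat_semiring) exp"
  shows "\<exists>\<gamma> :: ('t, 'p, 'v, 's) exp set \<Rightarrow> 't atom
                 \<Rightarrow> ('p, 'v, ('t, 'p, 'v, 's) exp set) outc \<Rightarrow> 's.
           wgkat_automaton \<gamma>
         \<and> is_hom (deriv :: ('t, 'p, 'v, 's) exp \<Rightarrow> _) \<gamma> (\<lambda>e. {f. e \<equiv>\<^sub>w f})
         \<and> (\<forall>e f :: ('t, 'p, 'v, 's) exp. {g. e \<equiv>\<^sub>w g} = {g. f \<equiv>\<^sub>w g} \<longleftrightarrow> e \<equiv>\<^sub>w f)"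
proof -
  have "\<exists>\<gamma>. wgkat_automaton \<gamma> \<and> is_hom (deriv :: ('t, 'p, 'v, 's) exp \<Rightarrow> _) \<gamma> (\<lambda>e. {f. e \<equiv>\<^sub>w f})"
  proof (rule quotient_automaton_exists)
    show "wgkat_automaton (deriv :: ('t, 'p, 'v, 's) exp \<Rightarrow> _)"
      by (simp add: wgkat_automaton_def fin_supp_deriv)
  next
    fix e f :: "('t, 'p, 'v, 's) exp" and \<alpha>
    assume "{g. e \<equiv>\<^sub>w g} = {g. f \<equiv>\<^sub>w g}"
    then show "pushforward (\<lambda>e. {f. e \<equiv>\<^sub>w f}) (deriv e \<alpha>) = pushforward (\<lambda>e. {f. e \<equiv>\<^sub>w f}) (deriv f \<alpha>)"
      by (simp add: eqv_class_eq_iff pushforward_deriv_eqv_class)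
  qed
  then show ?thesis
    using eqv_class_eq_iff by blast
qed

end
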